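(* Consider Method 2.2 (described in the context) and suppose it does not terminate and the numbers $\varepsilon_k>0$ satisfy $\varepsilon_k\to0$. Then the sequences $\{x_k\},\{\sigma_k\}$ are defined for all $k\in K$ and $\lim_{k\to\infty}f(x_k)=f^*$, $\lim_{k\to\infty}\sigma_k=f^*$.
   Context: Setting: $D\subset\mathbb{R}^n$ closed convex; $f$ convex on $\mathbb{R}^n$ attaining its minimum $f^*$ on $D$; $X^*=\{x\in D:f(x)=f^*\}$; $K=\{0,1,\dots\}$; $\operatorname{epi}(f,\mathbb{R}^n)=\{(x,\gamma):\gamma\ge f(x)\}$; for $Q\subset\mathbb{R}^{n+1}$, $W^1(u,Q)=\{a\in\mathbb{R}^{n+1}:\|a\|=1,\ \langle a,z-u\rangle\le0\ \forall z\in Q\}$; $J=\{1,\dots,m\}$. Method 2.2: fix $x^*\in X^*$; choose $v^j\in\operatorname{int}\operatorname{epi}(f,\mathbb{R}^n)$ ($j\in J$), a closed convex bounded $G_0\subset D$ with $x^*\in G_0$, a closed convex $M_0\subset\mathbb{R}^{n+1}$ with $(x^*,f^* )\in M_0$, numbers $\varepsilon_0>0$, $\bar\gamma_0\le f^*$, a constant $q\ge1$; $i=k=0$. Step 1: $(y_i,\gamma_i)$ solves $\min\{\gamma: x\in G_i,\ (x,\gamma)\in M_i,\ \gamma\ge\bar\gamma_i\}$; if $f(y_i)=\gamma_i$ stop. Step 2: if $f(y_i)-\gamma_i>\varepsilon_k$, choose closed convex $Q_i\subset M_i$ with $(x^*,f^* )\in Q_i$, set $u_i=y_i$ and go to Step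 4. Step 3: choose closed convex $Q_i\ni(x^*,f^* )$; choose $x_k\in G_i$ with $f(x_k)\le f(y_i)$; set $i_k=i$, $\sigma_k=\gamma_{i_k}$, $u_i=x_k$; choose $\varepsilon_{k+1}>0$; $k\leftarrow k+1$. Step 4: for each $j\in J$ choose $z_i^j$ in the open segment $(v^j,(u_i,\gamma_i))$ with $z_i^j\notin\operatorname{int}\operatorname{epi}(f,\mathbb{R}^n)$ such that $(u_i,\gamma_i)+q_i^j(z_i^j-(u_i,\gamma_i))\in\operatorname{epi}(f,\mathbb{R}^n)$ for some $q_i^j\in[1,q]$. Step 5: for $j\in J$ choose nonempty finite $A_i^j\subset W^1(z_i^j,\operatorname{epi}(f,\mathbb{R}^n))$; $M_{i+1}=Q_i\cap\bigcap_{j\in J}\{w\in\mathbb{R}^{n+1}:\langle a,w-z_i^j\rangle\le0\ \forall a\in A_i^j\}$. Step 6: choose closed convex $G_{i+1}\subset G_0$ with $x^*\in G_{i+1}$ and $\bar\gamma_{i+1}\in[\bar\gamma_0,f^*]$; $i\leftarrow i+1$; go to Step 1. *)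

theory Defs
  imports "HOL-Analysis.Analysis"
begin

definition epi :: "('a::euclidean_space \<Rightarrow> real) \<Rightarrow> ('a \<times> real) set" where
  "epi f = {(x, g). g \<ge> f x}"

definition W1 :: "'b::real_inner \<Rightarrow> 'b set \<Rightarrow> 'b set" where
  "W1 u Q = {a. norm a = 1 \<and> (\<forall>z\<in>Q. inner a (z - u) \<le> 0)}"

end

theory Submission
  imports Defs
begin

(* While the counter k stays fixed, every iteration cuts at a boundary point z_i of the epigraph
   on the segment from an interior point v to the current point (y_i, gam_i), which lies at
   least eps_k below the graph. Uniform continuity of f on bounded sets keeps z_i a fixed fraction
   of the way from v to (y_i, gam_i), so each cut separates (y_i, gam_i) from all later points by
   a fixed distance; a bounded sequence admits no such separation, hence k grows without bound.
   Whenever k increases at iteration i, Step 3 gives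
   fstar <= f x_k <= f y_i <= gam_i + eps_k <= fstar + eps_k and sigma_k = gam_i. *)

lemma unit_increments_pass_every_value:
  fixes s :: "nat \<Rightarrow> nat"
  assumes "s 0 = 0" and steps: "\<And>i. s (Suc i) = s i \<or> s (Suc i) = Suc (s i)"
    and "k < s n"
  shows "\<exists>i<n. s i = k \<and> s (Suc i) = Suc k"
  using \<open>k < s n\<close>
proof (induction n)
  case 0
  with \<open>s 0 = 0\<close> show ?case by simp
next
  case (Suc n)
  show ?case
  proof (cases "k < s n")
    case True
    with Suc.IH show ?thesis using less_SucI by blast
  next
    case False
    with Suc.prems steps[of n] have "s n = k \<and> s (Suc n) = Suc k" by auto
    then show ?thesis by blast
  qed
qed

lemma bounded_mono_nat_seq_eventually_const:
  fixes s :: "nat \<Rightarrow> nat"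
  assumes "mono s" and bound: "\<And>i. s i \<le> K"
  shows "\<exists>i0. \<forall>i\<ge>i0. s i = s i0"
proof -
  have fin: "finite (range s)"
    using bound by (intro finite_subset[OF _ finite_atMost[of K]]) auto
  have "Max (range s) \<in> range s"
    using fin by (intro Max_in) auto
  then obtain i0 where "s i0 = Max (range s)"
    by auto
  then have "s i \<le> s i0" for i
    using fin by simp
  then show ?thesis
    using monoD[OF \<open>mono s\<close>] by (meson le_antisym)
qed

lemma bounded_sequence_has_close_terms:
  fixes p :: "nat \<Rightarrow> 'a::heine_borel"
  assumes "bounded (range p)" and "c > 0"
  obtains i j where "i < j" and "dist (p i) (p j) < c"
proof -
  obtain l r where r: "strict_mono r" and "(p \<circ> r) \<longlonglongrightarrow> l"
    using bounded_imp_convergent_subsequence[OF assms(1)] by blast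
  from this(2) have "Cauchy (p \<circ> r)"
    by (rule LIMSEQ_imp_Cauchy)
  then obtain N where "\<forall>i\<ge>N. \<forall>j\<ge>N. dist ((p \<circ> r) i) ((p \<circ> r) j) < c"
    using \<open>c > 0\<close> unfolding Cauchy_def by blast
  then have "dist (p (r N)) (p (r (Suc N))) < c"
    by simp
  moreover have "r N < r (Suc N)"
    using r by (simp add: strict_mono_def)
  ultimately show ?thesis
    using that by blast
qed

lemma supporting_normal_margin:
  fixes a V p z :: "'a::real_inner"
  assumes a: "a \<in> W1 z E" and ball: "ball V r \<subseteq> E" and "r > 0"
    and z: "z = (1 - t) *\<^sub>R V + t *\<^sub>R p" and t: "0 < t" "t < 1"
  shows "(1 - t) * (r / 2) \<le> inner a (p - z)"
proof -
  have norm_a: "norm a = 1" and cut: "\<And>w. w \<in> E \<Longrightarrow> inner a (w - z) \<le> 0"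
    using a unfolding W1_def by auto
  have "V + (r / 2) *\<^sub>R a \<in> E"
    using ball norm_a \<open>r > 0\<close> by (auto simp: dist_norm)
  then have "inner a (V + (r / 2) *\<^sub>R a - z) \<le> 0"
    by (rule cut)
  moreover have "inner a a = 1"
    using norm_a by (simp add: norm_eq_sqrt_inner)
  moreover have "V + (r / 2) *\<^sub>R a - z = (r / 2) *\<^sub>R a - t *\<^sub>R (p - V)"
    using z by (simp add: algebra_simps)
  ultimately have half: "r / 2 \<le> t * inner a (p - V)"
    by (simp add: inner_diff_right)
  then have "0 < t * inner a (p - V)"
    using \<open>r > 0\<close> by linarith
  then have "0 < inner a (p - V)"
    using t by (simp add: zero_less_mult_iff)
  then have "t * inner a (p - V) \<le> inner a (p - V)"
    using t by (intro mult_left_le_one_le) auto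
  with half have "r / 2 \<le> inner a (p - V)"
    by linarith
  moreover have "p - z = (1 - t) *\<^sub>R (p - V)"
    using z by (simp add: algebra_simps)
  ultimately show ?thesis
    using t by (simp add: mult_left_mono)
qed

lemma epigraph_entry_step_bounded_below:
  fixes f :: "'a::real_normed_vector \<Rightarrow> real"
  assumes uc: "uniformly_continuous_on S f" and S: "convex S" "bounded S" "v \<in> S" and "e > 0"
  obtains l0 where "l0 > 0"
    and "\<And>y g l. y \<in> S \<Longrightarrow> e \<le> f y - g \<Longrightarrow> \<bar>vg - g\<bar> \<le> B \<Longrightarrow> 0 \<le> l \<Longrightarrow>
      f (y + l *\<^sub>R (v - y)) \<le> g + l * (vg - g) \<Longrightarrow> l0 \<le> l"
proof -
  obtain d where "d > 0" and d: "\<And>x x'. x \<in> S \<Longrightarrow> x' \<in> S \<Longrightarrow> dist x' x < d \<Longrightarrow> dist (f x') (f x) < e / 2"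
    using uc \<open>e > 0\<close> unfolding uniformly_continuous_on_def by (meson half_gt_zero)
  obtain b where "b > 0" and b: "\<And>x. x \<in> S \<Longrightarrow> norm x \<le> b"
    using S(2) unfolding bounded_pos by blast
  define l0 where "l0 = min 1 (min (d / (2 * b)) (e / (2 * (\<bar>B\<bar> + 1))))"
  have "l0 > 0"
    unfolding l0_def using \<open>d > 0\<close> \<open>b > 0\<close> \<open>e > 0\<close> by simp
  moreover have "l0 \<le> l"
    if y: "y \<in> S" and gap: "e \<le> f y - g" and vg: "\<bar>vg - g\<bar> \<le> B" and "0 \<le> l"
      and entry: "f (y + l *\<^sub>R (v - y)) \<le> g + l * (vg - g)" for y g l
  proof (rule ccontr)
    assume "\<not> l0 \<le> l"
    then have "l < 1" and "l < d / (2 * b)" and "l < e / (2 * (\<bar>B\<bar> + 1))"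
      by (auto simp: l0_def)
    then have l_d: "l * (2 * b) < d" and l_e: "l * (2 * (\<bar>B\<bar> + 1)) < e"
      using \<open>b > 0\<close> by (simp_all add: pos_less_divide_eq)
    define w where "w = y + l *\<^sub>R (v - y)"
    have "w = (1 - l) *\<^sub>R y + l *\<^sub>R v"
      unfolding w_def by (simp add: algebra_simps)
    then have "w \<in> S"
      using convexD[OF S(1) y S(3)] \<open>0 \<le> l\<close> \<open>l < 1\<close> by simp
    have "dist w y = l * norm (v - y)"
      unfolding w_def using \<open>0 \<le> l\<close> by (simp add: dist_norm)
    also have "\<dots> \<le> l * (2 * b)"
      using b[OF y] b[OF S(3)] norm_triangle_ineq4[of v y] \<open>0 \<le> l\<close> by (intro mult_left_mono) auto
    finally have "dist (f w) (f y) < e / 2"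
      using d[OF y \<open>w \<in> S\<close>] l_d by linarith
    moreover have "l * (vg - g) \<le> l * (\<bar>B\<bar> + 1)"
      using vg \<open>0 \<le> l\<close> by (intro mult_left_mono) auto
    ultimately show False
      using entry gap l_e unfolding w_def dist_real_def by linarith
  qed
  ultimately show ?thesis
    using that by blast
qed

lemma no_uniformly_deep_cut_sequence:
  fixes f :: "'a::euclidean_space \<Rightarrow> real" and p z a :: "nat \<Rightarrow> 'a \<times> real"
    and s :: "nat \<Rightarrow> real"
  assumes f: "continuous_on UNIV f" and V: "V \<in> interior (epi f)"
    and p: "bounded (range p)"
    and "e > 0" and gap: "\<And>i. e \<le> f (fst (p i)) - snd (p i)"
    and z: "\<And>i. z i \<in> open_segment V (p i)"
    and s: "\<And>i. s i \<in> {1..q}" and overshoot: "\<And>i. p i + s i *\<^sub>R (z i - p i) \<in> epi f"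
    and a: "\<And>i. a i \<in> W1 (z i) (epi f)"
    and cuts: "\<And>i j. i < j \<Longrightarrow> inner (a i) (p j - z i) \<le> 0"
  shows False
proof -
  obtain r where "r > 0" and ball: "ball V r \<subseteq> epi f"
    using V mem_interior by blast
  have "bounded (insert (fst V) (fst ` range p))"
    using bounded_fst[OF p] by simp
  then obtain R where R: "insert (fst V) (fst ` range p) \<subseteq> cball 0 R"
    unfolding bounded_pos by (auto simp: subset_eq)
  obtain B where B: "\<And>i. \<bar>snd V - snd (p i)\<bar> \<le> B"
  proof -
    obtain b where "\<forall>g\<in>snd ` range p. norm g \<le> b"
      using bounded_snd[OF p] unfolding bounded_pos by blast
    then have "\<bar>snd (p i)\<bar> \<le> b" for i
      by simp
    then have "\<bar>snd V - snd (p i)\<bar> \<le> \<bar>snd V\<bar> + b" for i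
      using abs_triangle_ineq4[of "snd V" "snd (p i)"] by (meson add_left_mono order_trans)
    then show thesis
      using that by blast
  qed
  have "uniformly_continuous_on (cball 0 R) f"
    using compact_uniformly_continuous[OF continuous_on_subset[OF f] compact_cball] by simp
  then obtain l0 where "l0 > 0" and entry_step: "\<And>y g l. y \<in> cball 0 R \<Longrightarrow> e \<le> f y - g \<Longrightarrow>
      \<bar>snd V - g\<bar> \<le> B \<Longrightarrow> 0 \<le> l \<Longrightarrow> f (y + l *\<^sub>R (fst V - y)) \<le> g + l * (snd V - g) \<Longrightarrow> l0 \<le> l"
    using epigraph_entry_step_bounded_below[of "cball 0 R" f "fst V" e "snd V" B] R \<open>e > 0\<close>
    by auto
  have "q \<ge> 1"
    using s[of 0] by simp
  define c where "c = l0 / q * (r / 2)"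
  have "c > 0"
    unfolding c_def using \<open>l0 > 0\<close> \<open>q \<ge> 1\<close> \<open>r > 0\<close> by simp
  \<comment> \<open>Entering the epigraph from p i towards V takes a step of length at least l0,
    so z i stays a fraction at least l0 / q of the way from V to p i.\<close>
  have margin: "c \<le> inner (a i) (p i - z i)" for i
  proof -
    obtain t where t: "0 < t" "t < 1" and zt: "z i = (1 - t) *\<^sub>R V + t *\<^sub>R p i"
      using z[of i] unfolding in_segment by blast
    define l where "l = s i * (1 - t)"
    have "1 \<le> s i" "s i \<le> q"
      using s[of i] by auto
    have "z i - p i = (1 - t) *\<^sub>R (V - p i)"
      using zt by (simp add: algebra_simps)
    then have "p i + l *\<^sub>R (V - p i) \<in> epi f"
      using overshoot[of i] unfolding l_def by simp
    then have "f (fst (p i) + l *\<^sub>R (fst V - fst (p i))) \<le> snd (p i) + l * (snd V - snd (p i))"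
      unfolding epi_def by (auto simp: case_prod_unfold)
    moreover have "0 \<le> l"
      unfolding l_def using \<open>1 \<le> s i\<close> t by simp
    moreover have "fst (p i) \<in> cball 0 R"
      using R by blast
    ultimately have "l0 \<le> l"
      using entry_step gap[of i] B[of i] by blast
    also have "l \<le> q * (1 - t)"
      unfolding l_def using \<open>s i \<le> q\<close> t by (simp add: mult_right_mono)
    finally have "l0 / q \<le> 1 - t"
      using \<open>q \<ge> 1\<close> by (simp add: divide_le_eq mult.commute)
    then have "c \<le> (1 - t) * (r / 2)"
      unfolding c_def using \<open>r > 0\<close> by (intro mult_right_mono) auto
    also have "\<dots> \<le> inner (a i) (p i - z i)"
      using supporting_normal_margin[OF a ball \<open>r > 0\<close> zt t] .
    finally show ?thesis .
  qed
  have separated: "c \<le> dist (p i) (p j)" if "i < j" for i j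
  proof -
    have "c \<le> inner (a i) (p i - z i) - inner (a i) (p j - z i)"
      using margin[of i] cuts[OF that] by linarith
    also have "\<dots> = inner (a i) (p i - p j)"
      by (simp add: inner_diff_right)
    also have "\<dots> \<le> norm (a i) * norm (p i - p j)"
      by (rule norm_cauchy_schwarz)
    also have "\<dots> = dist (p i) (p j)"
      using a[of i] by (simp add: W1_def dist_norm)
    finally show ?thesis .
  qed
  obtain i j where "i < j" "dist (p i) (p j) < c"
    using bounded_sequence_has_close_terms[OF p \<open>c > 0\<close>] .
  with separated show False
    by (meson not_le)
qed

(* Only the hypotheses of Method 2.2 that the convergence proof uses: closedness, convexity and
   finiteness merely make Step 1 solvable, and non-termination is built into the assumption that
   every step is carried out for every i. *)
locale epigraph_cutting_run =
  fixes f :: "'a::euclidean_space \<Rightarrow> real"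
    and D :: "'a set" and xstar :: 'a and fstar :: real
    and m :: nat and v :: "nat \<Rightarrow> 'a \<times> real" and q :: real
    and G :: "nat \<Rightarrow> 'a set" and M Q :: "nat \<Rightarrow> ('a \<times> real) set"
    and gbar gam eps sigma :: "nat \<Rightarrow> real"
    and y u x :: "nat \<Rightarrow> 'a" and kk :: "nat \<Rightarrow> nat"
    and z :: "nat \<Rightarrow> nat \<Rightarrow> 'a \<times> real" and qq :: "nat \<Rightarrow> nat \<Rightarrow> real"
    and A :: "nat \<Rightarrow> nat \<Rightarrow> ('a \<times> real) set"
  assumes f_convex: "convex_on UNIV f"
    and optimum: "f xstar = fstar" "\<And>x. x \<in> D \<Longrightarrow> fstar \<le> f x"
    and m: "m \<ge> 1"
    and v: "\<And>j. j \<in> {1..m} \<Longrightarrow> v j \<in> interior (epi f)"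
    and G0: "bounded (G 0)" "G 0 \<subseteq> D" "xstar \<in> G 0"
    and M0: "(xstar, fstar) \<in> M 0"
    and eps_pos: "\<And>k. eps k > 0"
    and gbar0: "gbar 0 \<le> fstar"
    and kk0: "kk 0 = 0"
    and step1: "\<And>i. y i \<in> G i" "\<And>i. (y i, gam i) \<in> M i" "\<And>i. gbar i \<le> gam i"
      "\<And>i w g. w \<in> G i \<Longrightarrow> (w, g) \<in> M i \<Longrightarrow> gbar i \<le> g \<Longrightarrow> gam i \<le> g"
    and step2: "\<And>i. eps (kk i) < f (y i) - gam i \<Longrightarrow>
      Q i \<subseteq> M i \<and> (xstar, fstar) \<in> Q i \<and> u i = y i \<and> kk (Suc i) = kk i"
    and step3: "\<And>i. f (y i) - gam i \<le> eps (kk i) \<Longrightarrow>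
      (xstar, fstar) \<in> Q i \<and> x (kk i) \<in> G i \<and> f (x (kk i)) \<le> f (y i) \<and> sigma (kk i) = gam i \<and>
      kk (Suc i) = Suc (kk i)"
    and step4: "\<And>i j. j \<in> {1..m} \<Longrightarrow> z i j \<in> open_segment (v j) (u i, gam i) \<and> qq i j \<in> {1..q} \<and>
      (u i, gam i) + qq i j *\<^sub>R (z i j - (u i, gam i)) \<in> epi f"
    and step5: "\<And>i j. j \<in> {1..m} \<Longrightarrow> A i j \<noteq> {} \<and> A i j \<subseteq> W1 (z i j) (epi f)"
      "\<And>i. M (Suc i) = Q i \<inter> (\<Inter>j\<in>{1..m}. {w. \<forall>a\<in>A i j. inner a (w - z i j) \<le> 0})"
    and step6: "\<And>i. G (Suc i) \<subseteq> G 0 \<and> xstar \<in> G (Suc i) \<and> gbar (Suc i) \<in> {gbar 0..fstar}"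
begin

lemma G_subset_G0: "G i \<subseteq> G 0"
  using step6 by (cases i) auto

lemma xstar_in_G: "xstar \<in> G i"
  using step6 G0 by (cases i) auto

lemma gbar_bounds: "gbar 0 \<le> gbar i" "gbar i \<le> fstar"
  using step6 gbar0 by (cases i; auto)+

lemma optimum_in_Q: "(xstar, fstar) \<in> Q i"
  using step2[of i] step3[of i] by (cases "eps (kk i) < f (y i) - gam i") auto

lemma epi_subset_cut:
  assumes "j \<in> {1..m}" "a \<in> A i j" "w \<in> epi f"
  shows "inner a (w - z i j) \<le> 0"
  using step5(1)[OF assms(1)] assms(2,3) unfolding W1_def by blast

lemma optimum_in_M: "(xstar, fstar) \<in> M i"
proof (cases i)
  case 0
  then show ?thesis using M0 by simp
next
  case (Suc n)
  have "(xstar, fstar) \<in> epi f"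
    using optimum(1) by (simp add: epi_def)
  then show ?thesis
    using Suc step5(2)[of n] optimum_in_Q[of n] epi_subset_cut by auto
qed

lemma gam_bounds: "gbar 0 \<le> gam i" "gam i \<le> fstar"
proof -
  show "gbar 0 \<le> gam i"
    using gbar_bounds(1) step1(3) by (rule order_trans)
  show "gam i \<le> fstar"
    by (rule step1(4)[OF xstar_in_G optimum_in_M gbar_bounds(2)])
qed

lemma fstar_le_f_y: "fstar \<le> f (y i)"
  using step1(1) G_subset_G0 G0(2) optimum(2) by blast

lemma kk_Suc: "kk (Suc i) = kk i \<or> kk (Suc i) = Suc (kk i)"
  using step2[of i] step3[of i] by (cases "eps (kk i) < f (y i) - gam i") auto

lemma mono_kk: "mono kk"
  unfolding mono_iff_le_Suc by (metis kk_Suc le_SucI order_refl)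

lemma kk_not_eventually_const:
  assumes const: "\<And>i. i0 \<le> i \<Longrightarrow> kk i = kk i0"
  shows False
proof -
  have serious_step: "eps (kk i0) < f (y i) - gam i \<and> Q i \<subseteq> M i \<and> u i = y i" if "i0 \<le> i" for i
  proof -
    have "kk (Suc i) = kk i"
      using const[of i] const[of "Suc i"] that by simp
    then have "\<not> f (y i) - gam i \<le> eps (kk i)"
      using step3[of i] by auto
    then have "eps (kk i) < f (y i) - gam i"
      by simp
    then show ?thesis
      using step2[of i] const[OF that] by simp
  qed
  have one: "1 \<in> {1..m}"
    using m by simp
  define p where "p n = (y (n + i0), gam (n + i0))" for n
  define a where "a n = (SOME a. a \<in> A (n + i0) 1)" for n
  have a_in_A: "a n \<in> A (n + i0) 1" for n
    unfolding a_def using step5(1)[OF one] by (simp add: some_in_eq)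
  have "M (Suc i) \<subseteq> M i" if "i0 \<le> i" for i
    using step5(2)[of i] serious_step[OF that] by auto
  then have decreasing: "decseq (\<lambda>n. M (n + i0))"
    by (intro decseq_SucI) simp
  have cuts: "inner (a n) (p n' - z (n + i0) 1) \<le> 0" if "n < n'" for n n'
  proof -
    have "p n' \<in> M (n' + i0)"
      unfolding p_def by (rule step1(2))
    also have "\<dots> \<subseteq> M (Suc (n + i0))"
      using decseqD[OF decreasing, of "Suc n" n'] that by simp
    also have "\<dots> \<subseteq> {w. \<forall>a\<in>A (n + i0) 1. inner a (w - z (n + i0) 1) \<le> 0}"
      using step5(2)[of "n + i0"] one by blast
    finally show ?thesis
      using a_in_A[of n] by blast
  qed
  have "p n \<in> G 0 \<times> {gbar 0..fstar}" for n
    unfolding p_def using step1(1) G_subset_G0 gam_bounds by auto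
  then have "range p \<subseteq> G 0 \<times> {gbar 0..fstar}"
    by blast
  then have p_bounded: "bounded (range p)"
    using bounded_subset[OF bounded_Times[OF G0(1) bounded_closed_interval]] by blast
  have f_continuous: "continuous_on UNIV f"
    using convex_on_continuous[OF open_UNIV f_convex] .
  show False
  proof (rule no_uniformly_deep_cut_sequence[OF f_continuous v[OF one] p_bounded eps_pos[of "kk i0"]])
    show "eps (kk i0) \<le> f (fst (p n)) - snd (p n)" for n
      using serious_step[of "n + i0"] unfolding p_def by simp
    show "z (n + i0) 1 \<in> open_segment (v 1) (p n)"
      and "qq (n + i0) 1 \<in> {1..q}"
      and "p n + qq (n + i0) 1 *\<^sub>R (z (n + i0) 1 - p n) \<in> epi f" for n
      using step4[OF one, of "n + i0"] serious_step[of "n + i0"] unfolding p_def by auto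
    show "a n \<in> W1 (z (n + i0) 1) (epi f)" for n
      using step5(1)[OF one] a_in_A by blast
  qed (rule cuts)
qed

lemma kk_unbounded: "\<exists>i. k < kk i"
proof (rule ccontr)
  assume "\<nexists>i. k < kk i"
  then have "kk i \<le> k" for i
    using not_less by blast
  then obtain i0 where "\<forall>i\<ge>i0. kk i = kk i0"
    using bounded_mono_nat_seq_eventually_const[OF mono_kk] by blast
  then show False
    using kk_not_eventually_const[of i0] by blast
qed

lemma x_sigma_bounds:
  "fstar \<le> f (x k)" "f (x k) \<le> fstar + eps k" "fstar - eps k \<le> sigma k" "sigma k \<le> fstar"
proof -
  obtain n where "k < kk n"
    using kk_unbounded by blast
  then obtain i where i: "kk i = k" "kk (Suc i) = Suc k"
    using unit_increments_pass_every_value[OF kk0 kk_Suc] by blast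
  then have "\<not> eps k < f (y i) - gam i"
    using step2[of i] by auto
  then have "f (y i) - gam i \<le> eps k"
    by simp
  with i have x: "x k \<in> G i" "f (x k) \<le> f (y i)" and "sigma k = gam i"
    using step3[of i] by auto
  have "x k \<in> D"
    using x(1) G_subset_G0 G0(2) by blast
  then show "fstar \<le> f (x k)"
    by (rule optimum(2))
  show "f (x k) \<le> fstar + eps k" "fstar - eps k \<le> sigma k" "sigma k \<le> fstar"
    using x(2) \<open>sigma k = gam i\<close> \<open>f (y i) - gam i \<le> eps k\<close> fstar_le_f_y[of i] gam_bounds(2)[of i]
    by linarith+
qed

lemma f_x_tendsto_fstar:
  assumes "eps \<longlonglongrightarrow> 0"
  shows "(\<lambda>k. f (x k)) \<longlonglongrightarrow> fstar"
proof (rule tendsto_sandwich[of "\<lambda>_. fstar" _ _ "\<lambda>k. fstar + eps k"])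
  show "(\<lambda>k. fstar + eps k) \<longlonglongrightarrow> fstar"
    using tendsto_add[OF tendsto_const assms] by simp
qed (use x_sigma_bounds in auto)

lemma sigma_tendsto_fstar:
  assumes "eps \<longlonglongrightarrow> 0"
  shows "sigma \<longlonglongrightarrow> fstar"
proof (rule tendsto_sandwich[of "\<lambda>k. fstar - eps k" _ _ "\<lambda>_. fstar"])
  show "(\<lambda>k. fstar - eps k) \<longlonglongrightarrow> fstar"
    using tendsto_diff[OF tendsto_const assms] by simp
qed (use x_sigma_bounds in auto)

end

theorem theorem2p2p3:
  fixes f :: "'a::euclidean_space \<Rightarrow> real"
    and D :: "'a set" and xstar :: 'a and fstar :: real
    and m :: nat and v :: "nat \<Rightarrow> 'a \<times> real" and q :: real
    and G :: "nat \<Rightarrow> 'a set" and M Q :: "nat \<Rightarrow> ('a \<times> real) set"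
    and gbar gam eps sigma :: "nat \<Rightarrow> real"
    and y u x :: "nat \<Rightarrow> 'a" and kk :: "nat \<Rightarrow> nat"
    and z :: "nat \<Rightarrow> nat \<Rightarrow> 'a \<times> real" and qq :: "nat \<Rightarrow> nat \<Rightarrow> real"
    and A :: "nat \<Rightarrow> nat \<Rightarrow> ('a \<times> real) set"
  assumes D: "closed D" "convex D"
    and f_convex: "convex_on UNIV f"
    and xstar: "xstar \<in> D" "f xstar = fstar" "\<forall>x\<in>D. fstar \<le> f x"
    and m: "m \<ge> 1"
    and v: "\<forall>j\<in>{1..m}. v j \<in> interior (epi f)"
    and G0: "closed (G 0)" "convex (G 0)" "bounded (G 0)" "G 0 \<subseteq> D" "xstar \<in> G 0"
    and M0: "closed (M 0)" "convex (M 0)" "(xstar, fstar) \<in> M 0"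
    and eps_pos: "\<forall>k. eps k > 0"
    and gbar0: "gbar 0 \<le> fstar"
    and q: "q \<ge> 1"
    and kk0: "kk 0 = 0"
    \<comment> \<open>Step 1: (y i, gam i) solves the auxiliary problem\<close>
    and step1: "\<forall>i. y i \<in> G i \<and> (y i, gam i) \<in> M i \<and> gam i \<ge> gbar i \<and>
        (\<forall>w g. w \<in> G i \<and> (w, g) \<in> M i \<and> g \<ge> gbar i \<longrightarrow> gam i \<le> g)"
    \<comment> \<open>the method does not terminate\<close>
    and nonterm: "\<forall>i. f (y i) \<noteq> gam i"
    \<comment> \<open>Step 2\<close>
    and step2: "\<forall>i. f (y i) - gam i > eps (kk i) \<longrightarrow>
        closed (Q i) \<and> convex (Q i) \<and> Q i \<subseteq> M i \<and> (xstar, fstar) \<in> Q i \<and>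
        u i = y i \<and> kk (Suc i) = kk i"
    \<comment> \<open>Step 3\<close>
    and step3: "\<forall>i. \<not> (f (y i) - gam i > eps (kk i)) \<longrightarrow>
        closed (Q i) \<and> convex (Q i) \<and> (xstar, fstar) \<in> Q i \<and>
        x (kk i) \<in> G i \<and> f (x (kk i)) \<le> f (y i) \<and> sigma (kk i) = gam i \<and>
        u i = x (kk i) \<and> kk (Suc i) = kk i + 1"
    \<comment> \<open>Step 4\<close>
    and step4: "\<forall>i. \<forall>j\<in>{1..m}. z i j \<in> open_segment (v j) (u i, gam i) \<and>
        z i j \<notin> interior (epi f) \<and> qq i j \<in> {1..q} \<and>
        (u i, gam i) + qq i j *\<^sub>R (z i j - (u i, gam i)) \<in> epi f"
    \<comment> \<open>Step 5\<close>
    and step5: "\<forall>i. (\<forall>j\<in>{1..m}. finite (A i j) \<and> A i j \<noteq> {} \<and> A i j \<subseteq> W1 (z i j) (epi f)) \<and>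
        M (Suc i) = Q i \<inter> (\<Inter>j\<in>{1..m}. {w. \<forall>a\<in>A i j. inner a (w - z i j) \<le> 0})"
    \<comment> \<open>Step 6\<close>
    and step6: "\<forall>i. closed (G (Suc i)) \<and> convex (G (Suc i)) \<and> G (Suc i) \<subseteq> G 0 \<and>
        xstar \<in> G (Suc i) \<and> gbar (Suc i) \<in> {gbar 0..fstar}"
    and eps_lim: "eps \<longlonglongrightarrow> 0"
  shows "(\<forall>k. \<exists>i. k < kk i) \<and> (\<lambda>k. f (x k)) \<longlonglongrightarrow> fstar \<and> sigma \<longlonglongrightarrow> fstar"
proof -
  interpret epigraph_cutting_run f D xstar fstar m v q G M Q gbar gam eps sigma y u x kk z qq A
    by unfold_locales (use assms in \<open>auto simp: not_less\<close>)
  show ?thesis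
    using kk_unbounded f_x_tendsto_fstar[OF eps_lim] sigma_tendsto_fstar[OF eps_lim] by blast
qed

end
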